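(* Let $n\ge 1$, $d_1,\dots,d_n\ge 1$, $L_i\in\mathbb{C}^{d_i\times d_i}$ ($i=1,\dots,n$) and $C_{i,i-1}\in\mathbb{C}^{d_i\times d_{i-1}}$ ($i=2,\dots,n$). Assume: (i) each $L_i$ is invertible and diagonalizable, $L_iV_i=V_i\Lambda_i$ with $V_i$ invertible and $\Lambda_i=\mathrm{diag}(\lambda_{i,1},\dots,\lambda_{i,d_i})$; (ii) $\sigma(L_i)\cap\sigma(L_j)=\emptyset$ for all $i\neq j$; (iii) $\|L_1\|<\|L_2\|<\cdots<\|L_n\|\le 1$. Then for every $i\in\{1,\dots,n\}$, $s_i\in\{1,\dots,d_i\}$, $x=(x_1,\dots,x_n)\in\mathbb{C}^{d_1}\times\cdots\times\mathbb{C}^{d_n}$ and $t\in\mathbb{N}$, $$\big|\Psi_{i,s_i}(\mathsf{Lin}^{\circ t}(x))-\Psi_{i,s_i}(\mathsf{Nom}^{\circ t}(\mathsf{pert}(x)))\big|\le\|\psi_{i,s_i}\|\sum_{j=1}^{i-1}\|D_{i,j}\|\,\big\|L_j^t\,\mathsf{pert}_j(x_1,\dots,x_j)\big\|,$$ and $$\lim_{t\to\infty}\frac{\big|\Psi_{i,s_i}(\mathsf{Lin}^{\circ t}(x))-\Psi_{i,s_i}(\mathsf{Nom}^{\circ t}(\mathsf{pert}(x)))\big|}{\|L_i\|^t}=0.$$ (Equivalently, in Koopman notation, $|(\mathcal U_{\mathsf{Lin}}^{\circ t}\Psi_{i,s_i})(x)-(\mathcal U_{\mathsf{Nom}}^{\circ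 t}\Psi_{i,s_i})(\mathsf{pert}(x))|$ obeys these bounds, where $\mathcal U_F f=f\circ F$.)
   Context: Each $\mathbb{C}^{d_i}$ carries a fixed norm $\|\cdot\|$, matrices carry the induced operator norm. The linear chained cascade map is $\mathsf{Lin}(x_1,\dots,x_n)=(L_1x_1,\;L_2x_2+C_{2,1}x_1,\;\dots,\;L_nx_n+C_{n,n-1}x_{n-1})$, the nominal map is $\mathsf{Nom}(x_1,\dots,x_n)=(L_1x_1,\dots,L_nx_n)$, and $\mathsf{F}^{\circ t}$ is the $t$-fold iterate. The principal eigenfunction $\psi_{i,s}:\mathbb{C}^{d_i}\to\mathbb{C}$ is $\psi_{i,s}(x_i)=\hat e_s^{*}V_i^{-1}x_i$, where $\hat e_s$ is the $s$-th standard basis vector of $\mathbb{C}^{d_i}$; $\|\psi_{i,s}\|$ is its norm as a linear functional on $(\mathbb{C}^{d_i},\|\cdot\|)$; and $\Psi_{i,s}(x_1,\dots,x_n)=\psi_{i,s}(x_i)$ is its trivial extension to $\mathbb{C}^{d_1}\times\cdots\times\mathbb{C}^{d_n}$. Matrices $D_{i,j}$ ($1\le j\le i\le n$) are defined recursively in $i$: $D_{i,i}=I_{d_i}$; for $i\ge 2$, $1\le j\le i-1$, $[\tilde C_{i,j}]_{\ell,m}=[V_i^{-1}C_{i,i-1}D_{i-1,j}V_j]_{\ell,m}(1-\lambda_{j,m}/\lambda_{i,\ell})^{-1}$ and $D_{i,j}=L_i^{-1}V_i\tilde C_{i,j}V_j^{-1}$. Define $\mathsf{pert}_1(x_1)=x_1$,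 $\mathsf{pert}_i(x_1,\dots,x_i)=x_i+\sum_{j=1}^{i-1}(-1)^{i-1-j}D_{i,j}\mathsf{pert}_j(x_1,\dots,x_j)$ for $i\ge2$, and $\mathsf{pert}(x)=(\mathsf{pert}_1(x_1),\dots,\mathsf{pert}_n(x_1,\dots,x_n))$. *)

theory Defs
  imports "HOL-Analysis.Analysis" "Jordan_Normal_Form.Spectral_Radius"
begin

definition minv :: "complex mat \<Rightarrow> complex mat" where
  "minv A = (SOME B. inverts_mat A B \<and> inverts_mat B A)"

definition diagm :: "nat \<Rightarrow> (nat \<Rightarrow> complex) \<Rightarrow> complex mat" where
  "diagm k lam = mat k k (\<lambda>(l, m). if l = m then lam l else 0)"

definition is_norm_on :: "nat \<Rightarrow> (complex vec \<Rightarrow> real) \<Rightarrow> bool" where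
  "is_norm_on k N \<longleftrightarrow>
     (\<forall>v\<in>carrier_vec k. 0 \<le> N v \<and> (N v = 0 \<longleftrightarrow> v = 0\<^sub>v k)) \<and>
     (\<forall>c. \<forall>v\<in>carrier_vec k. N (c \<cdot>\<^sub>v v) = cmod c * N v) \<and>
     (\<forall>u\<in>carrier_vec k. \<forall>v\<in>carrier_vec k. N (u + v) \<le> N u + N v)"

definition opnorm :: "(complex vec \<Rightarrow> real) \<Rightarrow> (complex vec \<Rightarrow> real) \<Rightarrow> complex mat \<Rightarrow> real" where
  "opnorm Nout Nin A = Sup {Nout (A *\<^sub>v v) | v. v \<in> carrier_vec (dim_col A) \<and> Nin v \<le> 1}"

definition fnorm :: "(complex vec \<Rightarrow> real) \<Rightarrow> nat \<Rightarrow> (complex vec \<Rightarrow> complex) \<Rightarrow> real" where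
  "fnorm N k f = Sup {cmod (f v) | v. v \<in> carrier_vec k \<and> N v \<le> 1}"

(* Points of C^{d_1} x ... x C^{d_n} are represented as x :: nat \<Rightarrow> complex vec,
   component i (1 \<le> i \<le> n) being x i.  C i stands for C_{i,i-1}. *)
definition Lin :: "(nat \<Rightarrow> complex mat) \<Rightarrow> (nat \<Rightarrow> complex mat) \<Rightarrow> (nat \<Rightarrow> complex vec) \<Rightarrow> (nat \<Rightarrow> complex vec)" where
  "Lin L C x = (\<lambda>i. if i \<le> 1 then L i *\<^sub>v x i else L i *\<^sub>v x i + C i *\<^sub>v x (i - 1))"

definition Nom :: "(nat \<Rightarrow> complex mat) \<Rightarrow> (nat \<Rightarrow> complex vec) \<Rightarrow> (nat \<Rightarrow> complex vec)" where
  "Nom L x = (\<lambda>i. L i *\<^sub>v x i)"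

(* psi_{i,s}(y) = e_s^* V_i^{-1} y   (s is 0-based here) *)
definition psi :: "(nat \<Rightarrow> complex mat) \<Rightarrow> nat \<Rightarrow> nat \<Rightarrow> complex vec \<Rightarrow> complex" where
  "psi V i s y = (minv (V i) *\<^sub>v y) $ s"

definition Psi :: "(nat \<Rightarrow> complex mat) \<Rightarrow> nat \<Rightarrow> nat \<Rightarrow> (nat \<Rightarrow> complex vec) \<Rightarrow> complex" where
  "Psi V i s x = psi V i s (x i)"

(* D_{i,j}, recursive in i; lam i l = lambda_{i,l+1} (0-based entry index) *)
fun Dm :: "(nat \<Rightarrow> nat) \<Rightarrow> (nat \<Rightarrow> complex mat) \<Rightarrow> (nat \<Rightarrow> complex mat) \<Rightarrow> (nat \<Rightarrow> complex mat)
           \<Rightarrow> (nat \<Rightarrow> nat \<Rightarrow> complex) \<Rightarrow> nat \<Rightarrow> nat \<Rightarrow> complex mat" where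
  "Dm d L C V lam 0 j = 1\<^sub>m (d 0)"
| "Dm d L C V lam (Suc i) j =
     (if j = Suc i then 1\<^sub>m (d (Suc i))
      else (let Ct = mat (d (Suc i)) (d j)
                  (\<lambda>(l, m). (minv (V (Suc i)) * C (Suc i) * Dm d L C V lam i j * V j) $$ (l, m)
                             * inverse (1 - lam j m / lam (Suc i) l))
            in minv (L (Suc i)) * V (Suc i) * Ct * minv (V j)))"

fun pert :: "(nat \<Rightarrow> nat) \<Rightarrow> (nat \<Rightarrow> complex mat) \<Rightarrow> (nat \<Rightarrow> complex mat) \<Rightarrow> (nat \<Rightarrow> complex mat)
           \<Rightarrow> (nat \<Rightarrow> nat \<Rightarrow> complex) \<Rightarrow> (nat \<Rightarrow> complex vec) \<Rightarrow> nat \<Rightarrow> complex vec" where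
  "pert d L C V lam x i =
     (if i \<le> 1 then x i
      else vec (d i) (\<lambda>l. x i $ l +
             (\<Sum>j\<in>{1..<i}. (-1) ^ (i - 1 - j) * (Dm d L C V lam i j *\<^sub>v pert d L C V lam x j) $ l)))"

definition pertv :: "(nat \<Rightarrow> nat) \<Rightarrow> (nat \<Rightarrow> complex mat) \<Rightarrow> (nat \<Rightarrow> complex mat) \<Rightarrow> (nat \<Rightarrow> complex mat)
           \<Rightarrow> (nat \<Rightarrow> nat \<Rightarrow> complex) \<Rightarrow> (nat \<Rightarrow> complex vec) \<Rightarrow> (nat \<Rightarrow> complex vec)" where
  "pertv d L C V lam x = (\<lambda>i. pert d L C V lam x i)"

end

(*
  Change coordinates by y_i = z_i + \<Sum>_{j<i} (-1)^(i-j) D_{i,j} z_j (the map unpert below).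
  Because the spectra of the L_i are disjoint, the D_{i,j} solve the Sylvester equations
  L_i D_{i,j} - D_{i,j} L_j = C_{i,i-1} D_{i-1,j} (entrywise in the eigenbases), and these make
  unpert conjugate Nom to Lin; moreover unpert inverts pert. Hence
  Lin^t x = unpert (Nom^t (pert x)), so the i-th component of the difference is
  \<Sum>_{j<i} \<plusminus>D_{i,j} L_j^t pert_j(x), which gives the bound, and after division by
  \<parallel>L_i\<parallel>^t each term decays like (\<parallel>L_j\<parallel>/\<parallel>L_i\<parallel>)^t.
  The operator norms are finite (and bound their matrices) because every norm on C^k is
  equivalent to the l1 norm, by compactness of the l1 unit sphere.
*)

theory Submission
  imports Defs
begin

no_notation vec_nth (infixl "$" 90)

lemma is_norm_on_nonneg: "is_norm_on k N \<Longrightarrow> v \<in> carrier_vec k \<Longrightarrow> 0 \<le> N v"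
  unfolding is_norm_on_def by auto

lemma is_norm_on_eq_0_iff: "is_norm_on k N \<Longrightarrow> v \<in> carrier_vec k \<Longrightarrow> N v = 0 \<longleftrightarrow> v = 0\<^sub>v k"
  unfolding is_norm_on_def by auto

lemma is_norm_on_smult: "is_norm_on k N \<Longrightarrow> v \<in> carrier_vec k \<Longrightarrow> N (c \<cdot>\<^sub>v v) = cmod c * N v"
  unfolding is_norm_on_def by auto

lemma is_norm_on_triangle:
  "is_norm_on k N \<Longrightarrow> u \<in> carrier_vec k \<Longrightarrow> v \<in> carrier_vec k \<Longrightarrow> N (u + v) \<le> N u + N v"
  unfolding is_norm_on_def by auto

lemma is_norm_on_zero: "is_norm_on k N \<Longrightarrow> N (0\<^sub>v k) = 0"
  by (simp add: is_norm_on_eq_0_iff)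

lemma is_norm_on_sum_le:
  assumes N: "is_norm_on k N" and J: "finite J" and X: "\<forall>j\<in>J. X j \<in> carrier_vec k"
  shows "N (vec k (\<lambda>l. \<Sum>j\<in>J. c j * X j $ l)) \<le> (\<Sum>j\<in>J. cmod (c j) * N (X j))"
  using J X
proof (induction J rule: finite_induct)
  case empty
  have "vec k (\<lambda>l. 0) = (0\<^sub>v k :: complex vec)" by (intro eq_vecI) auto
  then show ?case using is_norm_on_zero[OF N] by simp
next
  case (insert a F)
  have Xa: "X a \<in> carrier_vec k" using insert by auto
  have "vec k (\<lambda>l. \<Sum>j\<in>insert a F. c j * X j $ l) = c a \<cdot>\<^sub>v X a + vec k (\<lambda>l. \<Sum>j\<in>F. c j * X j $ l)"
    using insert Xa by (intro eq_vecI) auto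
  then have "N (vec k (\<lambda>l. \<Sum>j\<in>insert a F. c j * X j $ l))
      \<le> N (c a \<cdot>\<^sub>v X a) + N (vec k (\<lambda>l. \<Sum>j\<in>F. c j * X j $ l))"
    using is_norm_on_triangle[OF N, of "c a \<cdot>\<^sub>v X a"] Xa by simp
  also have "\<dots> \<le> cmod (c a) * N (X a) + (\<Sum>j\<in>F. cmod (c j) * N (X j))"
    using insert is_norm_on_smult[OF N Xa] by simp
  finally show ?case using insert by simp
qed

lemma is_norm_on_le_l1:
  assumes N: "is_norm_on k N" and v: "v \<in> carrier_vec k"
  shows "N v \<le> (\<Sum>l<k. N (unit_vec k l)) * (\<Sum>l<k. cmod (v $ l))"
proof -
  have "v = vec k (\<lambda>r. \<Sum>l<k. v $ l * unit_vec k l $ r)"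
    using v by (intro eq_vecI) (auto simp: unit_vec_def if_distrib sum.delta cong: if_cong)
  then have "N v \<le> (\<Sum>l<k. cmod (v $ l) * N (unit_vec k l))"
    using is_norm_on_sum_le[OF N, of "{..<k}" "unit_vec k" "\<lambda>l. v $ l"] by simp
  also have "\<dots> \<le> (\<Sum>l<k. cmod (v $ l) * (\<Sum>l<k. N (unit_vec k l)))"
    using is_norm_on_nonneg[OF N]
    by (intro sum_mono mult_left_mono member_le_sum) auto
  also have "\<dots> = (\<Sum>l<k. N (unit_vec k l)) * (\<Sum>l<k. cmod (v $ l))"
    by (subst sum_distrib_right[symmetric]) (rule mult.commute)
  finally show ?thesis .
qed

lemma bounded_coords_convergent_subseq:
  fixes u :: "nat \<Rightarrow> complex vec"
  assumes bounded: "\<forall>m. \<forall>l<k. cmod (u m $ l) \<le> B"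
  shows "\<exists>r. strict_mono r \<and> (\<forall>l<k. convergent (\<lambda>m. u (r m) $ l))"
proof -
  have "j \<le> k \<Longrightarrow> \<exists>r. strict_mono r \<and> (\<forall>l<j. convergent (\<lambda>m. u (r m) $ l))" for j
  proof (induction j)
    case 0
    show ?case using strict_mono_id by blast
  next
    case (Suc j)
    then obtain r where r: "strict_mono r" "\<forall>l<j. convergent (\<lambda>m. u (r m) $ l)" by auto
    have "bounded (range (\<lambda>m. u (r m) $ j))"
      unfolding bounded_iff using bounded Suc.prems by (intro exI[of _ B]) auto
    then obtain a r' where r': "strict_mono r'" "((\<lambda>m. u (r m) $ j) \<circ> r') \<longlonglongrightarrow> a"
      using bounded_imp_convergent_subsequence by blast
    have "convergent (\<lambda>m. u (r (r' m)) $ l)" if "l < Suc j" for l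
    proof (cases "l = j")
      case True
      then show ?thesis using r'(2) unfolding convergent_def by (auto simp: o_def)
    next
      case False
      then have "l < j" using that by simp
      then obtain b where "(\<lambda>m. u (r m) $ l) \<longlonglongrightarrow> b"
        using r(2) unfolding convergent_def by auto
      from LIMSEQ_subseq_LIMSEQ[OF this r'(1)] show ?thesis
        unfolding convergent_def by (auto simp: o_def)
    qed
    then show ?case using strict_mono_o[OF r(1) r'(1)] by (auto simp: o_def)
  qed
  then show ?thesis by simp
qed

lemma is_norm_on_tendsto_coordwise:
  assumes N: "is_norm_on k N" and u: "\<And>m. u m \<in> carrier_vec k" and w: "w \<in> carrier_vec k"
    and lim: "\<And>l. l < k \<Longrightarrow> (\<lambda>m. u m $ l) \<longlonglongrightarrow> w $ l"
  shows "(\<lambda>m. N (u m)) \<longlonglongrightarrow> N w"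
proof -
  define M where "M = (\<Sum>l<k. N (unit_vec k l))"
  define e where "e m = M * (\<Sum>l<k. cmod (u m $ l - w $ l))" for m
  have diff_le: "N (x - y) \<le> M * (\<Sum>l<k. cmod (x $ l - y $ l))"
    if "x \<in> carrier_vec k" "y \<in> carrier_vec k" for x y
  proof -
    have "(\<Sum>l<k. cmod ((x - y) $ l)) = (\<Sum>l<k. cmod (x $ l - y $ l))"
      using that by (intro sum.cong) auto
    then show ?thesis using is_norm_on_le_l1[OF N, of "x - y"] that unfolding M_def by simp
  qed
  have close: "\<bar>N (u m) - N w\<bar> \<le> e m" for m
  proof -
    have "u m = w + (u m - w)" "w = u m + (w - u m)"
      using u[of m] w by (auto intro!: eq_vecI)
    then have "N (u m) \<le> N w + N (u m - w)" "N w \<le> N (u m) + N (w - u m)"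
      using is_norm_on_triangle[OF N] u w by (metis minus_carrier_vec)+
    moreover have "N (u m - w) \<le> e m" "N (w - u m) \<le> e m"
      using diff_le[OF u w] diff_le[OF w u] by (simp_all add: e_def norm_minus_commute)
    ultimately show ?thesis by linarith
  qed
  have "e \<longlonglongrightarrow> M * (\<Sum>l<k. cmod (w $ l - w $ l))"
    unfolding e_def by (intro tendsto_intros lim) auto
  then have "e \<longlonglongrightarrow> 0" by simp
  then have "(\<lambda>m. N (u m) - N w) \<longlonglongrightarrow> 0"
    by (rule Lim_null_comparison[rotated]) (simp add: close)
  then show ?thesis by (simp add: LIM_zero_iff)
qed

lemma is_norm_on_bounded_below_on_l1_sphere:
  assumes N: "is_norm_on k N"
  shows "\<exists>c>0. \<forall>v\<in>carrier_vec k. (\<Sum>l<k. cmod (v $ l)) = 1 \<longrightarrow> c \<le> N v"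
proof (rule ccontr)
  assume contra: "\<not> ?thesis"
  have "\<exists>u. u \<in> carrier_vec k \<and> (\<Sum>l<k. cmod (u $ l)) = 1 \<and> N u < inverse (real m + 1)"
    for m :: nat
  proof -
    have "inverse (real m + 1) > 0" by simp
    then show ?thesis using contra by (meson not_le)
  qed
  then obtain u where u: "\<And>m. u m \<in> carrier_vec k" and u_l1: "\<And>m. (\<Sum>l<k. cmod (u m $ l)) = 1"
    and u_small: "\<And>m. N (u m) < inverse (real m + 1)"
    by metis
  have "cmod (u m $ l) \<le> 1" if "l < k" for m l
    using member_le_sum[of l "{..<k}" "\<lambda>l. cmod (u m $ l)"] that u_l1 by simp
  then obtain r where r: "strict_mono r" "\<forall>l<k. convergent (\<lambda>m. u (r m) $ l)"
    using bounded_coords_convergent_subseq[of k u 1] by blast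
  define w where "w = vec k (\<lambda>l. lim (\<lambda>m. u (r m) $ l))"
  have w: "w \<in> carrier_vec k" unfolding w_def by simp
  have w_lim: "(\<lambda>m. u (r m) $ l) \<longlonglongrightarrow> w $ l" if "l < k" for l
    using r(2) that unfolding w_def by (simp add: convergent_LIMSEQ_iff)
  have "(\<lambda>m. \<Sum>l<k. cmod (u (r m) $ l)) \<longlonglongrightarrow> (\<Sum>l<k. cmod (w $ l))"
    by (intro tendsto_intros w_lim) auto
  then have w_l1: "(\<Sum>l<k. cmod (w $ l)) = 1"
    by (simp add: u_l1 LIMSEQ_const_iff)
  have inverse_lim: "(\<lambda>m. inverse (real (r m) + 1)) \<longlonglongrightarrow> 0"
    using LIMSEQ_subseq_LIMSEQ[OF LIMSEQ_inverse_real_of_nat r(1)] by (simp add: o_def add.commute)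
  have "(\<lambda>m. N (u (r m))) \<longlonglongrightarrow> 0"
    by (rule tendsto_sandwich[OF _ _ tendsto_const inverse_lim])
      (simp_all add: is_norm_on_nonneg[OF N u] u_small less_imp_le)
  moreover have "(\<lambda>m. N (u (r m))) \<longlonglongrightarrow> N w"
    using is_norm_on_tendsto_coordwise[OF N u w w_lim] .
  ultimately have "N w = 0" using LIMSEQ_unique by blast
  then have "w = 0\<^sub>v k" using is_norm_on_eq_0_iff[OF N w] by simp
  then show False using w_l1 by simp
qed

lemma l1_le_is_norm_on:
  assumes N: "is_norm_on k N"
  shows "\<exists>c>0. \<forall>v\<in>carrier_vec k. (\<Sum>l<k. cmod (v $ l)) \<le> c * N v"
proof -
  obtain c where c: "c > 0" and below: "\<And>u. u \<in> carrier_vec k \<Longrightarrow> (\<Sum>l<k. cmod (u $ l)) = 1 \<Longrightarrow> c \<le> N u"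
    using is_norm_on_bounded_below_on_l1_sphere[OF N] by blast
  have "(\<Sum>l<k. cmod (v $ l)) \<le> inverse c * N v" if v: "v \<in> carrier_vec k" for v
  proof (cases "(\<Sum>l<k. cmod (v $ l)) = 0")
    case True
    then show ?thesis using c is_norm_on_nonneg[OF N v] by simp
  next
    case False
    define S where "S = (\<Sum>l<k. cmod (v $ l))"
    then have S: "S > 0" using False by (simp add: order_le_neq_trans sum_nonneg)
    define u where "u = complex_of_real (1 / S) \<cdot>\<^sub>v v"
    have u: "u \<in> carrier_vec k" unfolding u_def using v by simp
    have "(\<Sum>l<k. cmod (u $ l)) = (\<Sum>l<k. cmod (v $ l) / S)"
      using v S unfolding u_def by (intro sum.cong) (simp_all add: norm_divide)
    then have "(\<Sum>l<k. cmod (u $ l)) = 1" using S by (simp add: S_def flip: sum_divide_distrib)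
    then have "c \<le> N v / S"
      using below[OF u] is_norm_on_smult[OF N v] S unfolding u_def by (simp add: norm_divide)
    then show ?thesis using c S unfolding S_def[symmetric] by (simp add: field_simps)
  qed
  then show ?thesis using c by (intro exI[of _ "inverse c"]) auto
qed

lemma le_Sup_unit_ball_mult:
  assumes N: "is_norm_on k N"
    and hom: "\<And>c v. v \<in> carrier_vec k \<Longrightarrow> g (c \<cdot>\<^sub>v v) = cmod c * g v"
    and bounded: "\<And>v. v \<in> carrier_vec k \<Longrightarrow> g v \<le> K * N v"
  shows "\<forall>v\<in>carrier_vec k. g v \<le> Sup {g w |w. w \<in> carrier_vec k \<and> N w \<le> 1} * N v"
    and "0 \<le> Sup {g w |w. w \<in> carrier_vec k \<and> N w \<le> 1}"
proof -
  define S where "S = {g w |w. w \<in> carrier_vec k \<and> N w \<le> 1}"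
  have "0 \<cdot>\<^sub>v 0\<^sub>v k = (0\<^sub>v k :: complex vec)" by (intro eq_vecI) auto
  then have g0: "g (0\<^sub>v k) = 0" using hom[of "0\<^sub>v k" 0] by simp
  have "0 \<in> S" unfolding S_def using g0 is_norm_on_zero[OF N]
    by (auto intro!: exI[of _ "0\<^sub>v k"])
  moreover have bdd: "bdd_above S"
  proof (rule bdd_aboveI)
    fix x assume "x \<in> S"
    then obtain w where w: "w \<in> carrier_vec k" "N w \<le> 1" "x = g w" unfolding S_def by auto
    have "x \<le> K * N w" using bounded w by auto
    also have "\<dots> \<le> \<bar>K\<bar> * N w" using is_norm_on_nonneg[OF N w(1)] by (simp add: mult_right_mono)
    also have "\<dots> \<le> \<bar>K\<bar>" using w(2) by (simp add: mult_left_le)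
    finally show "x \<le> \<bar>K\<bar>" .
  qed
  ultimately show "0 \<le> Sup {g w |w. w \<in> carrier_vec k \<and> N w \<le> 1}"
    unfolding S_def[symmetric] by (rule cSup_upper)
  show "\<forall>v\<in>carrier_vec k. g v \<le> Sup {g w |w. w \<in> carrier_vec k \<and> N w \<le> 1} * N v"
    unfolding S_def[symmetric]
  proof
    fix v :: "complex vec" assume v: "v \<in> carrier_vec k"
    show "g v \<le> Sup S * N v"
    proof (cases "N v = 0")
      case True
      then show ?thesis using g0 is_norm_on_eq_0_iff[OF N v] by simp
    next
      case False
      then have pos: "N v > 0" using is_norm_on_nonneg[OF N v] by simp
      define w where "w = complex_of_real (1 / N v) \<cdot>\<^sub>v v"
      have "w \<in> carrier_vec k" "N w = 1"
        unfolding w_def using v is_norm_on_smult[OF N v] pos by (simp_all add: norm_divide)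
      then have "g w \<le> Sup S" unfolding S_def by (intro cSup_upper[OF _ bdd[unfolded S_def]]) auto
      moreover have "g w = g v / N v" unfolding w_def using hom v pos by (simp add: norm_divide)
      ultimately show ?thesis using pos by (simp add: field_simps)
    qed
  qed
qed

lemma l1_mult_mat_vec_le:
  assumes A: "A \<in> carrier_mat k' k" and v: "v \<in> carrier_vec k"
  shows "(\<Sum>r<k'. cmod ((A *\<^sub>v v) $ r))
         \<le> (\<Sum>r<k'. \<Sum>l<k. cmod (A $$ (r, l))) * (\<Sum>l<k. cmod (v $ l))"
proof -
  have "cmod ((A *\<^sub>v v) $ r) \<le> (\<Sum>l<k. cmod (A $$ (r, l))) * (\<Sum>l<k. cmod (v $ l))"
    if r: "r < k'" for r
  proof -
    have "(A *\<^sub>v v) $ r = (\<Sum>l<k. A $$ (r, l) * v $ l)"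
      using A r v by (auto simp: scalar_prod_def lessThan_atLeast0 intro!: sum.cong)
    then have "cmod ((A *\<^sub>v v) $ r) \<le> (\<Sum>l<k. cmod (A $$ (r, l)) * cmod (v $ l))"
      by (auto intro!: order.trans[OF norm_sum] simp: norm_mult)
    also have "\<dots> \<le> (\<Sum>l<k. cmod (A $$ (r, l)) * (\<Sum>l<k. cmod (v $ l)))"
      by (intro sum_mono mult_left_mono member_le_sum) auto
    finally show ?thesis by (simp add: sum_distrib_right)
  qed
  then show ?thesis by (subst sum_distrib_right) (intro sum_mono, simp)
qed

lemma l1_mult_mat_vec_le_is_norm_on:
  assumes A: "A \<in> carrier_mat k' k" and N: "is_norm_on k N"
  obtains K where "\<And>v. v \<in> carrier_vec k \<Longrightarrow> (\<Sum>r<k'. cmod ((A *\<^sub>v v) $ r)) \<le> K * N v"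
proof -
  obtain c where c: "\<forall>v\<in>carrier_vec k. (\<Sum>l<k. cmod (v $ l)) \<le> c * N v"
    using l1_le_is_norm_on[OF N] by blast
  define S where "S = (\<Sum>r<k'. \<Sum>l<k. cmod (A $$ (r, l)))"
  have "(\<Sum>r<k'. cmod ((A *\<^sub>v v) $ r)) \<le> (S * c) * N v" if v: "v \<in> carrier_vec k" for v
  proof -
    have "0 \<le> S" unfolding S_def by (intro sum_nonneg) auto
    then have "S * (\<Sum>l<k. cmod (v $ l)) \<le> S * (c * N v)" using c v by (intro mult_left_mono) auto
    then show ?thesis using l1_mult_mat_vec_le[OF A v] unfolding S_def by (simp add: mult.assoc)
  qed
  then show thesis by (rule that)
qed

lemma opnorm_mult_le:
  assumes A: "A \<in> carrier_mat k' k" and N: "is_norm_on k N" and N': "is_norm_on k' N'"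
  shows "\<forall>v\<in>carrier_vec k. N' (A *\<^sub>v v) \<le> opnorm N' N A * N v"
    and "0 \<le> opnorm N' N A"
proof -
  obtain K where K: "\<And>v. v \<in> carrier_vec k \<Longrightarrow> (\<Sum>r<k'. cmod ((A *\<^sub>v v) $ r)) \<le> K * N v"
    using l1_mult_mat_vec_le_is_norm_on[OF A N] by blast
  define M where "M = (\<Sum>l<k'. N' (unit_vec k' l))"
  have "M \<ge> 0" unfolding M_def using is_norm_on_nonneg[OF N'] by (intro sum_nonneg) auto
  then have bound: "N' (A *\<^sub>v v) \<le> (M * K) * N v" if "v \<in> carrier_vec k" for v
    using is_norm_on_le_l1[OF N', of "A *\<^sub>v v"] K[OF that] A that
    by (auto simp: M_def mult.assoc intro: order.trans mult_left_mono)
  have hom: "N' (A *\<^sub>v (c \<cdot>\<^sub>v v)) = cmod c * N' (A *\<^sub>v v)" if "v \<in> carrier_vec k" for c v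
    using A that by (simp add: mult_mat_vec is_norm_on_smult[OF N'])
  have "dim_col A = k" using A by simp
  then show "\<forall>v\<in>carrier_vec k. N' (A *\<^sub>v v) \<le> opnorm N' N A * N v"
    and "0 \<le> opnorm N' N A"
    using le_Sup_unit_ball_mult[OF N hom bound] unfolding opnorm_def by simp_all
qed

lemma fnorm_coord_mult_le:
  assumes B: "B \<in> carrier_mat k' k" and s: "s < k'" and N: "is_norm_on k N"
  shows "\<forall>v\<in>carrier_vec k. cmod ((B *\<^sub>v v) $ s) \<le> fnorm N k (\<lambda>v. (B *\<^sub>v v) $ s) * N v"
    and "0 \<le> fnorm N k (\<lambda>v. (B *\<^sub>v v) $ s)"
proof -
  obtain K where K: "\<And>v. v \<in> carrier_vec k \<Longrightarrow> (\<Sum>r<k'. cmod ((B *\<^sub>v v) $ r)) \<le> K * N v"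
    using l1_mult_mat_vec_le_is_norm_on[OF B N] by blast
  have bound: "cmod ((B *\<^sub>v v) $ s) \<le> K * N v" if "v \<in> carrier_vec k" for v
    using member_le_sum[of s "{..<k'}" "\<lambda>r. cmod ((B *\<^sub>v v) $ r)"] K[OF that] s by simp
  have hom: "cmod ((B *\<^sub>v (c \<cdot>\<^sub>v v)) $ s) = cmod c * cmod ((B *\<^sub>v v) $ s)"
    if "v \<in> carrier_vec k" for c v
    using B s that by (simp add: mult_mat_vec norm_mult)
  show "\<forall>v\<in>carrier_vec k. cmod ((B *\<^sub>v v) $ s) \<le> fnorm N k (\<lambda>v. (B *\<^sub>v v) $ s) * N v"
    and "0 \<le> fnorm N k (\<lambda>v. (B *\<^sub>v v) $ s)"
    using le_Sup_unit_ball_mult[OF N hom bound] unfolding fnorm_def by simp_all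
qed

lemma opnorm_pow_mult_le:
  assumes A: "A \<in> carrier_mat k k" and N: "is_norm_on k N" and v: "v \<in> carrier_vec k"
  shows "N ((A ^\<^sub>m t) *\<^sub>v v) \<le> opnorm N N A ^ t * N v"
  using v
proof (induction t arbitrary: v)
  case 0
  then show ?case using A by simp
next
  case (Suc t)
  note op = opnorm_mult_le[OF A N N]
  have "(A ^\<^sub>m Suc t) *\<^sub>v v = (A ^\<^sub>m t) *\<^sub>v (A *\<^sub>v v)"
    using A Suc.prems by (simp add: assoc_mult_mat_vec[of _ k k _ k])
  then have "N ((A ^\<^sub>m Suc t) *\<^sub>v v) \<le> opnorm N N A ^ t * N (A *\<^sub>v v)"
    using Suc.IH[of "A *\<^sub>v v"] A Suc.prems by simp
  also have "\<dots> \<le> opnorm N N A ^ t * (opnorm N N A * N v)"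
    using op Suc.prems by (intro mult_left_mono) auto
  finally show ?case by (simp add: mult.left_commute)
qed

lemma ratio_tendsto_0_if_dominated_by_slower_powers:
  fixes f :: "nat \<Rightarrow> real"
  assumes J: "finite J" and r: "\<forall>j\<in>J. 0 \<le> r j \<and> r j < \<rho>"
    and f: "\<And>t. 0 \<le> f t" "\<And>t. f t \<le> (\<Sum>j\<in>J. c j * r j ^ t)"
  shows "(\<lambda>t. f t / \<rho> ^ t) \<longlonglongrightarrow> 0"
proof (cases "J = {}")
  case True
  then have "f = (\<lambda>_. 0)" using f by (auto intro: order_antisym)
  then show ?thesis by simp
next
  case False
  then have \<rho>: "\<rho> > 0" using r by fastforce
  have upper: "f t / \<rho> ^ t \<le> (\<Sum>j\<in>J. c j * (r j / \<rho>) ^ t)" for t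
    using divide_right_mono[OF f(2)[of t], of "\<rho> ^ t"] \<rho>
    by (simp add: sum_divide_distrib power_divide)
  have "(\<lambda>t. \<Sum>j\<in>J. c j * (r j / \<rho>) ^ t) \<longlonglongrightarrow> (\<Sum>j\<in>J. c j * 0)"
    using r \<rho> by (intro tendsto_sum tendsto_mult tendsto_const LIMSEQ_realpow_zero) auto
  then have lim: "(\<lambda>t. \<Sum>j\<in>J. c j * (r j / \<rho>) ^ t) \<longlonglongrightarrow> 0" by simp
  show ?thesis
    by (rule tendsto_sandwich[OF _ _ tendsto_const lim]) (simp_all add: f(1) \<rho> upper less_imp_le)
qed

lemma minv_inverse:
  assumes A: "A \<in> carrier_mat k k" and inv: "invertible_mat A"
  shows "minv A \<in> carrier_mat k k" "A * minv A = 1\<^sub>m k" "minv A * A = 1\<^sub>m k"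
proof -
  have "\<exists>B. inverts_mat A B \<and> inverts_mat B A" using inv unfolding invertible_mat_def by auto
  then have B: "inverts_mat A (minv A) \<and> inverts_mat (minv A) A"
    unfolding minv_def by (rule someI_ex)
  then have right: "A * minv A = 1\<^sub>m k" and left: "minv A * A = 1\<^sub>m (dim_row (minv A))"
    using A unfolding inverts_mat_def by auto
  have "dim_col (minv A) = k" "dim_row (minv A) = k"
    using arg_cong[OF right, of dim_col] arg_cong[OF left, of dim_col] A by simp_all
  then show "minv A \<in> carrier_mat k k" "A * minv A = 1\<^sub>m k" "minv A * A = 1\<^sub>m k"
    using right left by auto
qed

lemma mult_assoc_dims:
  fixes A :: "'a :: semiring_0 mat"
  shows "dim_col A = dim_row B \<Longrightarrow> dim_col B = dim_row C \<Longrightarrow> A * B * C = A * (B * C)"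
  by (rule assoc_mult_mat[of A "dim_row A" "dim_col A" B "dim_col B" C "dim_col C"]) auto

lemma left_mult_one_dims:
  fixes A :: "'a :: semiring_1 mat"
  shows "dim_row A = n \<Longrightarrow> 1\<^sub>m n * A = A"
  by (rule left_mult_one_mat[of A n "dim_col A"]) auto

lemma right_mult_one_dims:
  fixes A :: "'a :: semiring_1 mat"
  shows "dim_col A = n \<Longrightarrow> A * 1\<^sub>m n = A"
  by (rule right_mult_one_mat[of A "dim_row A" n]) auto

lemma mult_cancel_left_dims:
  fixes A :: "'a :: semiring_1 mat"
  shows "A * B = 1\<^sub>m n \<Longrightarrow> dim_col A = dim_row B \<Longrightarrow> dim_col B = dim_row X \<Longrightarrow> dim_row X = n
    \<Longrightarrow> A * (B * X) = X"
  by (metis mult_assoc_dims left_mult_one_dims)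

lemma diagm_carrier[simp]: "diagm k f \<in> carrier_mat k k"
  unfolding diagm_def by simp

lemma diagm_dims[simp]: "dim_row (diagm k f) = k" "dim_col (diagm k f) = k"
  unfolding diagm_def by simp_all

lemma diagm_mult_index:
  assumes A: "A \<in> carrier_mat a b" and l: "l < a" and m: "m < b"
  shows "(diagm a f * A) $$ (l, m) = f l * A $$ (l, m)"
proof -
  have "(diagm a f * A) $$ (l, m) = (\<Sum>x\<in>{0..<a}. (if l = x then f l else 0) * A $$ (x, m))"
    using A l m by (simp add: diagm_def scalar_prod_def)
  also have "\<dots> = (\<Sum>x\<in>{0..<a}. if x = l then f l * A $$ (l, m) else 0)"
    by (intro sum.cong) auto
  also have "\<dots> = f l * A $$ (l, m)" using l by simp
  finally show ?thesis .
qed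

lemma mult_diagm_index:
  assumes A: "A \<in> carrier_mat a b" and l: "l < a" and m: "m < b"
  shows "(A * diagm b f) $$ (l, m) = A $$ (l, m) * f m"
proof -
  have "(A * diagm b f) $$ (l, m) = (\<Sum>x\<in>{0..<b}. A $$ (l, x) * (if x = m then f x else 0))"
    using A l m by (simp add: diagm_def scalar_prod_def)
  also have "\<dots> = (\<Sum>x\<in>{0..<b}. if x = m then A $$ (l, m) * f m else 0)"
    by (intro sum.cong) auto
  also have "\<dots> = A $$ (l, m) * f m" using m by simp
  finally show ?thesis .
qed

lemma diagm_mult_unit_vec:
  assumes l: "l < k"
  shows "diagm k f *\<^sub>v unit_vec k l = f l \<cdot>\<^sub>v unit_vec k l"
proof (rule eq_vecI)
  fix i assume "i < dim_vec (f l \<cdot>\<^sub>v unit_vec k l)"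
  then have i: "i < k" by simp
  have "(diagm k f *\<^sub>v unit_vec k l) $ i
        = (\<Sum>x\<in>{0..<k}. (if i = x then f i else 0) * (if x = l then 1 else 0))"
    using i l by (simp add: diagm_def scalar_prod_def unit_vec_def)
  also have "\<dots> = (\<Sum>x\<in>{0..<k}. if x = l then (if i = l then f l else 0) else 0)"
    by (intro sum.cong) auto
  also have "\<dots> = (f l \<cdot>\<^sub>v unit_vec k l) $ i" using i l by (simp add: unit_vec_def)
  finally show "(diagm k f *\<^sub>v unit_vec k l) $ i = (f l \<cdot>\<^sub>v unit_vec k l) $ i" .
qed (simp add: diagm_def)

lemma mult_mat_zero_vec: "A \<in> carrier_mat m k \<Longrightarrow> A *\<^sub>v 0\<^sub>v k = 0\<^sub>v m"
  by (intro eq_vecI) auto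

lemma diagonalization_eigenvalue:
  assumes L: "L \<in> carrier_mat k k" and V: "V \<in> carrier_mat k k" and V_inv: "invertible_mat V"
    and LV: "L * V = V * diagm k lam" and l: "l < k"
  shows "lam l \<in> spectrum L" and "invertible_mat L \<Longrightarrow> lam l \<noteq> 0"
proof -
  define w where "w = V *\<^sub>v unit_vec k l"
  have w: "w \<in> carrier_vec k" unfolding w_def using V by simp
  have Lw: "L *\<^sub>v w = lam l \<cdot>\<^sub>v w"
  proof -
    have "L *\<^sub>v w = (L * V) *\<^sub>v unit_vec k l" unfolding w_def using L V by simp
    also have "\<dots> = V *\<^sub>v (diagm k lam *\<^sub>v unit_vec k l)"
      unfolding LV by (rule assoc_mult_mat_vec[OF V diagm_carrier]) simp
    also have "\<dots> = lam l \<cdot>\<^sub>v w" unfolding diagm_mult_unit_vec[OF l] w_def using V by (simp add: mult_mat_vec)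
    finally show ?thesis .
  qed
  have "minv V *\<^sub>v w = unit_vec k l"
    unfolding w_def using minv_inverse[OF V V_inv] V by (simp flip: assoc_mult_mat_vec[of _ k k _ k])
  moreover have "unit_vec k l \<noteq> (0\<^sub>v k :: complex vec)"
    using l by (metis index_unit_vec(1) index_zero_vec(1) zero_neq_one)
  ultimately have w_nz: "w \<noteq> 0\<^sub>v k"
    using mult_mat_zero_vec[OF minv_inverse(1)[OF V V_inv]] by auto
  then show "lam l \<in> spectrum L"
    unfolding spectrum_def eigenvalue_def eigenvector_def using L w Lw by auto
  assume L_inv: "invertible_mat L"
  have "minv L *\<^sub>v (L *\<^sub>v w) = w"
    using minv_inverse[OF L L_inv] L w by (simp flip: assoc_mult_mat_vec[of _ k k _ k])
  moreover have "0 \<cdot>\<^sub>v w = 0\<^sub>v k" using w by (intro eq_vecI) auto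
  ultimately show "lam l \<noteq> 0"
    using Lw w_nz mult_mat_zero_vec[OF minv_inverse(1)[OF L L_inv]] by auto
qed

lemma diagm_mult_diagm_inverse:
  assumes nz: "\<forall>l<a. f l \<noteq> 0"
  shows "diagm a f * diagm a (\<lambda>l. inverse (f l)) = 1\<^sub>m a"
proof (rule eq_matI)
  fix i j assume "i < dim_row (1\<^sub>m a :: complex mat)" and "j < dim_col (1\<^sub>m a :: complex mat)"
  then have i: "i < a" and j: "j < a" by auto
  have "(diagm a f * diagm a (\<lambda>l. inverse (f l))) $$ (i, j)
        = f i * diagm a (\<lambda>l. inverse (f l)) $$ (i, j)"
    by (rule diagm_mult_index[OF diagm_carrier i j])
  then show "(diagm a f * diagm a (\<lambda>l. inverse (f l))) $$ (i, j) = 1\<^sub>m a $$ (i, j)"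
    using nz i j by (simp add: diagm_def)
qed (auto simp: diagm_def)

lemma minv_mult_eigenbasis:
  assumes L: "L \<in> carrier_mat k k" and V: "V \<in> carrier_mat k k" and L_inv: "invertible_mat L"
    and LV: "L * V = V * diagm k lam" and nz: "\<forall>l<k. lam l \<noteq> 0"
  shows "minv L * V = V * diagm k (\<lambda>l. inverse (lam l))"
proof -
  note mL = minv_inverse[OF L L_inv]
  note dims = carrier_matD[OF L] carrier_matD[OF V] carrier_matD[OF mL(1)]
  note simps = mult_assoc_dims left_mult_one_dims right_mult_one_dims dims
  have "minv L * V = minv L * (V * (diagm k lam * diagm k (\<lambda>l. inverse (lam l))))"
    using diagm_mult_diagm_inverse[OF nz] by (simp add: simps)
  also have "\<dots> = minv L * ((L * V) * diagm k (\<lambda>l. inverse (lam l)))"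
    unfolding LV by (simp add: simps)
  also have "\<dots> = V * diagm k (\<lambda>l. inverse (lam l))"
    by (simp add: simps mult_cancel_left_dims[OF mL(3)])
  finally show ?thesis .
qed

lemma eigenbasis_minv_mult:
  assumes L: "L \<in> carrier_mat k k" and V: "V \<in> carrier_mat k k" and V_inv: "invertible_mat V"
    and LV: "L * V = V * diagm k lam"
  shows "minv V * L = diagm k lam * minv V"
proof -
  note mV = minv_inverse[OF V V_inv]
  note dims = carrier_matD[OF L] carrier_matD[OF V] carrier_matD[OF mV(1)]
  note simps = mult_assoc_dims left_mult_one_dims right_mult_one_dims dims
  have "minv V * L = minv V * ((L * V) * minv V)" using mV by (simp add: simps)
  also have "\<dots> = minv V * (V * (diagm k lam * minv V))" unfolding LV by (simp add: simps)
  also have "\<dots> = diagm k lam * minv V"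
    by (simp add: simps mult_cancel_left_dims[OF mV(3)])
  finally show ?thesis .
qed

text \<open>Entrywise, \<open>(X - diag(1/\<mu>) X diag \<nu>) (l, m) = X (l, m) (1 - \<nu> m / \<mu> l)\<close>.\<close>

lemma diagonal_sylvester_solution:
  fixes M :: "complex mat"
  assumes M: "M \<in> carrier_mat a b"
    and nz: "\<forall>l<a. \<mu> l \<noteq> 0" and ne: "\<forall>l<a. \<forall>m<b. \<mu> l \<noteq> \<nu> m"
  defines "X \<equiv> mat a b (\<lambda>(l, m). M $$ (l, m) * inverse (1 - \<nu> m / \<mu> l))"
  shows "X - diagm a (\<lambda>l. inverse (\<mu> l)) * X * diagm b \<nu> = M"
proof (rule eq_matI)
  fix l m assume "l < dim_row M" and "m < dim_col M"
  then have l: "l < a" and m: "m < b" using M by auto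
  have X: "X \<in> carrier_mat a b" unfolding X_def by simp
  then have "diagm a (\<lambda>l. inverse (\<mu> l)) * X \<in> carrier_mat a b" by (simp add: mult_carrier_mat[OF diagm_carrier])
  then have "(diagm a (\<lambda>l. inverse (\<mu> l)) * X * diagm b \<nu>) $$ (l, m)
             = (diagm a (\<lambda>l. inverse (\<mu> l)) * X) $$ (l, m) * \<nu> m"
    by (rule mult_diagm_index[OF _ l m])
  also have "\<dots> = inverse (\<mu> l) * X $$ (l, m) * \<nu> m"
    unfolding diagm_mult_index[OF X l m] ..
  finally have "(diagm a (\<lambda>l. inverse (\<mu> l)) * X * diagm b \<nu>) $$ (l, m)
             = inverse (\<mu> l) * X $$ (l, m) * \<nu> m" .
  moreover have "\<mu> l - \<nu> m \<noteq> 0" "\<mu> l \<noteq> 0" using ne nz l m by auto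
  ultimately show "(X - diagm a (\<lambda>l. inverse (\<mu> l)) * X * diagm b \<nu>) $$ (l, m) = M $$ (l, m)"
    using l m X unfolding X_def by (auto simp: field_simps)
qed (use M in \<open>auto simp: X_def diagm_def\<close>)

text \<open>In the eigenbases of \<open>Li\<close> and \<open>Lj\<close> this Sylvester equation becomes the diagonal
  one above.\<close>

lemma sylvester_solution:
  fixes Li Lj Vi Vj M0 :: "complex mat"
  assumes Li: "Li \<in> carrier_mat a a" and Vi: "Vi \<in> carrier_mat a a"
    and Lj: "Lj \<in> carrier_mat b b" and Vj: "Vj \<in> carrier_mat b b" and M0: "M0 \<in> carrier_mat a b"
    and Li_inv: "invertible_mat Li" and Vi_inv: "invertible_mat Vi" and Vj_inv: "invertible_mat Vj"
    and LVi: "Li * Vi = Vi * diagm a li" and LVj: "Lj * Vj = Vj * diagm b lj"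
    and nz: "\<forall>l<a. li l \<noteq> 0" and ne: "\<forall>l<a. \<forall>m<b. li l \<noteq> lj m"
  defines "M \<equiv> minv Vi * M0 * Vj"
  defines "X \<equiv> mat a b (\<lambda>(l, m). M $$ (l, m) * inverse (1 - lj m / li l))"
  shows "Li * (minv Li * Vi * X * minv Vj) - (minv Li * Vi * X * minv Vj) * Lj = M0"
proof -
  note mLi = minv_inverse[OF Li Li_inv] and mVi = minv_inverse[OF Vi Vi_inv]
    and mVj = minv_inverse[OF Vj Vj_inv]
  define Bi where "Bi = diagm a (\<lambda>l. inverse (li l))"
  define Aj where "Aj = diagm b lj"
  have M: "M \<in> carrier_mat a b" unfolding M_def using mVi M0 Vj by auto
  have X: "X \<in> carrier_mat a b" unfolding X_def by simp
  have BXA: "Bi * X * Aj \<in> carrier_mat a b" unfolding Bi_def Aj_def using X by auto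
  note dims = carrier_matD[OF Li] carrier_matD[OF Vi] carrier_matD[OF Lj] carrier_matD[OF Vj]
    carrier_matD[OF M0] carrier_matD[OF mLi(1)] carrier_matD[OF mVi(1)] carrier_matD[OF mVj(1)]
    carrier_matD[OF M] carrier_matD[OF X] carrier_matD[OF BXA]
  note simps = mult_assoc_dims left_mult_one_dims right_mult_one_dims dims Bi_def Aj_def
  have "Li * (minv Li * Vi * X * minv Vj) = Vi * (X * minv Vj)"
    by (simp add: simps mult_cancel_left_dims[OF mLi(2)])
  moreover have "(minv Li * Vi * X * minv Vj) * Lj = Vi * ((Bi * X * Aj) * minv Vj)"
  proof -
    have "(minv Li * Vi * X * minv Vj) * Lj = (minv Li * Vi) * (X * (minv Vj * Lj))"
      by (simp add: simps)
    also have "\<dots> = Vi * ((Bi * X * Aj) * minv Vj)"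
      unfolding minv_mult_eigenbasis[OF Li Vi Li_inv LVi nz]
        eigenbasis_minv_mult[OF Lj Vj Vj_inv LVj] by (simp add: simps)
    finally show ?thesis .
  qed
  ultimately have "Li * (minv Li * Vi * X * minv Vj) - (minv Li * Vi * X * minv Vj) * Lj
                   = Vi * (X * minv Vj) - Vi * ((Bi * X * Aj) * minv Vj)" by simp
  also have "\<dots> = Vi * ((X - Bi * X * Aj) * minv Vj)"
    using X BXA mVj(1)
    by (simp add: minus_mult_distrib_mat[OF X BXA mVj(1)] mult_minus_distrib_mat[OF Vi, of _ b])
  also have "\<dots> = Vi * (M * minv Vj)"
    unfolding Bi_def Aj_def X_def diagonal_sylvester_solution[OF M nz ne] ..
  also have "\<dots> = M0"
    unfolding M_def using mVi mVj by (simp add: simps mult_cancel_left_dims[OF mVi(2)])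
  finally show ?thesis .
qed

lemma alternating_sign_sums_cancel:
  assumes "\<forall>j\<in>J. j < (i::nat)"
  shows "(\<Sum>j\<in>J. (-1) ^ (i - 1 - j) * f j) + (\<Sum>j\<in>J. (-1) ^ (i - j) * f j) = (0::complex)"
proof -
  have "(-1::complex) ^ (i - j) = - ((-1) ^ (i - 1 - j))" if "j \<in> J" for j
  proof -
    have "i - j = Suc (i - 1 - j)" using assms that by auto
    then show ?thesis by simp
  qed
  then show ?thesis unfolding sum.distrib[symmetric] by (intro sum.neutral) auto
qed

lemma mult_mat_vec_lincomb_index:
  fixes A :: "complex mat"
  assumes A: "A \<in> carrier_mat k' k" and u: "u \<in> carrier_vec k" and X: "\<forall>j\<in>J. X j \<in> carrier_vec k"
    and r: "r < k'"
  shows "(A *\<^sub>v vec k (\<lambda>l. u $ l + (\<Sum>j\<in>J. c j * X j $ l))) $ r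
       = (A *\<^sub>v u) $ r + (\<Sum>j\<in>J. c j * (A *\<^sub>v X j) $ r)"
proof -
  have index: "(A *\<^sub>v v) $ r = (\<Sum>l<k. A $$ (r, l) * v $ l)" if "v \<in> carrier_vec k" for v
    using A r that by (auto simp: scalar_prod_def lessThan_atLeast0 intro!: sum.cong)
  have "(A *\<^sub>v vec k (\<lambda>l. u $ l + (\<Sum>j\<in>J. c j * X j $ l))) $ r
      = (\<Sum>l<k. A $$ (r, l) * (u $ l + (\<Sum>j\<in>J. c j * X j $ l)))"
    by (rule trans[OF index]) auto
  also have "\<dots> = (\<Sum>l<k. A $$ (r, l) * u $ l) + (\<Sum>j\<in>J. c j * (\<Sum>l<k. A $$ (r, l) * X j $ l))"
    by (simp add: distrib_left sum.distrib sum_distrib_left sum.swap[of _ J])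
      (simp add: mult.left_commute)
  also have "\<dots> = (A *\<^sub>v u) $ r + (\<Sum>j\<in>J. c j * (A *\<^sub>v X j) $ r)"
    using index u X by simp
  finally show ?thesis .
qed

declare pert.simps[simp del]

locale cascade =
  fixes n :: nat and d :: "nat \<Rightarrow> nat"
    and L C V :: "nat \<Rightarrow> complex mat" and lam :: "nat \<Rightarrow> nat \<Rightarrow> complex"
  assumes Ldim: "\<forall>i\<in>{1..n}. L i \<in> carrier_mat (d i) (d i)"
    and Cdim: "\<forall>i\<in>{2..n}. C i \<in> carrier_mat (d i) (d (i - 1))"
    and Vdim: "\<forall>i\<in>{1..n}. V i \<in> carrier_mat (d i) (d i)"
    and Linv: "\<forall>i\<in>{1..n}. invertible_mat (L i)"
    and Vinv: "\<forall>i\<in>{1..n}. invertible_mat (V i)"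
    and diag: "\<forall>i\<in>{1..n}. L i * V i = V i * diagm (d i) (lam i)"
    and spec: "\<forall>i\<in>{1..n}. \<forall>j\<in>{1..n}. i \<noteq> j \<longrightarrow> spectrum (L i) \<inter> spectrum (L j) = {}"
begin

abbreviation "D \<equiv> Dm d L C V lam"

abbreviation "P x \<equiv> pert d L C V lam x"

lemma Dm_carrier: "1 \<le> j \<Longrightarrow> j \<le> i \<Longrightarrow> i \<le> n \<Longrightarrow> D i j \<in> carrier_mat (d i) (d j)"
proof (induction i)
  case 0
  then show ?case by simp
next
  case (Suc i)
  show ?case
  proof (cases "j = Suc i")
    case True
    then show ?thesis by simp
  next
    case False
    then have "j \<le> i" using Suc.prems by auto
    then have Li: "L (Suc i) \<in> carrier_mat (d (Suc i)) (d (Suc i))" "invertible_mat (L (Suc i))"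
      and Vi: "V (Suc i) \<in> carrier_mat (d (Suc i)) (d (Suc i))"
      and Vj: "V j \<in> carrier_mat (d j) (d j)" "invertible_mat (V j)"
      using Ldim Linv Vdim Vinv Suc.prems by auto
    show ?thesis
      using False minv_inverse(1)[OF Li] minv_inverse(1)[OF Vj] Vi by (auto simp: Let_def)
  qed
qed

lemma Dm_diag: "1 \<le> i \<Longrightarrow> D i i = 1\<^sub>m (d i)"
  by (cases i) auto

lemma lam_in_spectrum: "i \<in> {1..n} \<Longrightarrow> l < d i \<Longrightarrow> lam i l \<in> spectrum (L i)"
  using diagonalization_eigenvalue(1)[of "L i" "d i" "V i" "lam i" l] Ldim Vdim Vinv diag by auto

lemma lam_nonzero: "i \<in> {1..n} \<Longrightarrow> l < d i \<Longrightarrow> lam i l \<noteq> 0"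
  using diagonalization_eigenvalue(2)[of "L i" "d i" "V i" "lam i" l] Ldim Vdim Vinv diag Linv
  by auto

lemma Dm_sylvester:
  assumes i: "2 \<le> i" "i \<le> n" and j: "1 \<le> j" "j < i"
  shows "L i * D i j - D i j * L j = C i * D (i - 1) j"
proof -
  obtain i' where i': "i = Suc i'" using i by (cases i) auto
  have ne: "\<forall>l<d i. \<forall>m<d j. lam i l \<noteq> lam j m"
  proof (intro allI impI)
    fix l m assume "l < d i" "m < d j"
    then have "lam i l \<in> spectrum (L i)" "lam j m \<in> spectrum (L j)"
      using lam_in_spectrum i j by auto
    moreover have "spectrum (L i) \<inter> spectrum (L j) = {}" using spec i j by auto
    ultimately show "lam i l \<noteq> lam j m" by auto
  qed
  have D': "D i' j \<in> carrier_mat (d i') (d j)" using Dm_carrier[of j i'] i j i' by auto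
  have "C i \<in> carrier_mat (d i) (d (i - 1))" using Cdim i by auto
  then have Ci: "C i \<in> carrier_mat (d i) (d i')" using i' by simp
  have Vi: "V i \<in> carrier_mat (d i) (d i)" "invertible_mat (V i)" using Vdim Vinv i by auto
  have Vj: "V j \<in> carrier_mat (d j) (d j)" "invertible_mat (V j)" using Vdim Vinv i j by auto
  have "minv (V i) * C i * D i' j * V j = minv (V i) * (C i * D i' j) * V j"
    using minv_inverse(1)[OF Vi] Ci D' by (simp add: mult_assoc_dims)
  then show ?thesis
    using sylvester_solution[of "L i" "d i" "V i" "L j" "d j" "V j" "C i * D i' j" "lam i" "lam j"]
      i' j i Ldim Vi Vj Ci D' Linv diag lam_nonzero ne
    by (simp add: Let_def)
qed

lemma Dm_sylvester_index:
  assumes i: "2 \<le> i" "i \<le> n" and j: "1 \<le> j" "j < i"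
    and y: "y \<in> carrier_vec (d j)" and r: "r < d i"
  shows "(L i *\<^sub>v (D i j *\<^sub>v y)) $ r
         = (D i j *\<^sub>v (L j *\<^sub>v y)) $ r + (C i *\<^sub>v (D (i - 1) j *\<^sub>v y)) $ r"
proof -
  have Li: "L i \<in> carrier_mat (d i) (d i)" and Lj: "L j \<in> carrier_mat (d j) (d j)"
    and Ci: "C i \<in> carrier_mat (d i) (d (i - 1))" using Ldim Cdim i j by auto
  have Dij: "D i j \<in> carrier_mat (d i) (d j)"
    and D': "D (i - 1) j \<in> carrier_mat (d (i - 1)) (d j)" using Dm_carrier i j by auto
  have "(L i * D i j - D i j * L j) *\<^sub>v y = (C i * D (i - 1) j) *\<^sub>v y"
    using Dm_sylvester[OF i j] by simp
  then have "L i *\<^sub>v (D i j *\<^sub>v y) - D i j *\<^sub>v (L j *\<^sub>v y) = C i *\<^sub>v (D (i - 1) j *\<^sub>v y)"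
    using Li Lj Dij y Ci D' by (subst (asm) minus_mult_distrib_mat_vec) auto
  then have "(L i *\<^sub>v (D i j *\<^sub>v y)) $ r - (D i j *\<^sub>v (L j *\<^sub>v y)) $ r
             = (C i *\<^sub>v (D (i - 1) j *\<^sub>v y)) $ r"
    using r Li Lj Dij y by (metis index_minus_vec(1) dim_mult_mat_vec carrier_matD(1))
  then show ?thesis by (simp add: algebra_simps)
qed

definition unpert :: "(nat \<Rightarrow> complex vec) \<Rightarrow> nat \<Rightarrow> complex vec" where
  "unpert y i = vec (d i) (\<lambda>l. y i $ l + (\<Sum>j\<in>{1..<i}. (-1) ^ (i - j) * (D i j *\<^sub>v y j) $ l))"

lemma unpert_carrier: "unpert y i \<in> carrier_vec (d i)"
  unfolding unpert_def by simp

lemma unpert_1: "y 1 \<in> carrier_vec (d 1) \<Longrightarrow> unpert y 1 = y 1"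
  unfolding unpert_def by (intro eq_vecI) auto

lemma pert_carrier: "j \<in> {1..n} \<Longrightarrow> x j \<in> carrier_vec (d j) \<Longrightarrow> P x j \<in> carrier_vec (d j)"
  by (subst pert.simps) auto

lemma unpert_pertv:
  assumes x: "\<forall>k\<in>{1..n}. x k \<in> carrier_vec (d k)" and i: "i \<in> {1..n}"
  shows "unpert (pertv d L C V lam x) i = x i"
proof -
  have xi: "x i \<in> carrier_vec (d i)" using x i by auto
  show ?thesis
  proof (rule eq_vecI)
    fix l assume "l < dim_vec (x i)"
    then have l: "l < d i" using xi by simp
    have "unpert (pertv d L C V lam x) i $ l
          = P x i $ l + (\<Sum>j\<in>{1..<i}. (-1) ^ (i - j) * (D i j *\<^sub>v P x j) $ l)"
      unfolding unpert_def pertv_def using l by simp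
    also have "P x i $ l = x i $ l + (\<Sum>j\<in>{1..<i}. (-1) ^ (i - 1 - j) * (D i j *\<^sub>v P x j) $ l)"
      using l xi by (subst pert.simps) auto
    finally show "unpert (pertv d L C V lam x) i $ l = x i $ l"
      using alternating_sign_sums_cancel[of "{1..<i}" i] by (simp add: add.assoc)
  qed (use xi in \<open>simp add: unpert_def\<close>)
qed

lemma L_mult_unpert_index:
  assumes y: "\<forall>k\<in>{1..n}. y k \<in> carrier_vec (d k)" and i: "2 \<le> i" "i \<le> n" and r: "r < d i"
  shows "(L i *\<^sub>v unpert y i) $ r = unpert (Nom L y) i $ r
           + (\<Sum>j\<in>{1..<i}. (-1) ^ (i - j) * (C i *\<^sub>v (D (i - 1) j *\<^sub>v y j)) $ r)"
proof -
  have Li: "L i \<in> carrier_mat (d i) (d i)" and yi: "y i \<in> carrier_vec (d i)"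
    using Ldim y i by auto
  have yj: "y j \<in> carrier_vec (d j)" if "j \<in> {1..<i}" for j using y that i by auto
  have "D i j *\<^sub>v y j \<in> carrier_vec (d i)" if "j \<in> {1..<i}" for j
    using Dm_carrier[of j i] yj[OF that] that i by auto
  then have "(L i *\<^sub>v unpert y i) $ r
        = (L i *\<^sub>v y i) $ r + (\<Sum>j\<in>{1..<i}. (-1) ^ (i - j) * (L i *\<^sub>v (D i j *\<^sub>v y j)) $ r)"
    unfolding unpert_def by (intro mult_mat_vec_lincomb_index[OF Li yi _ r]) auto
  also have "\<dots> = (L i *\<^sub>v y i) $ r
        + (\<Sum>j\<in>{1..<i}. (-1) ^ (i - j) * (D i j *\<^sub>v (L j *\<^sub>v y j)) $ r)
        + (\<Sum>j\<in>{1..<i}. (-1) ^ (i - j) * (C i *\<^sub>v (D (i - 1) j *\<^sub>v y j)) $ r)"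
    unfolding add.assoc sum.distrib[symmetric] using Dm_sylvester_index[OF i _ _ _ r] yj
    by (intro arg_cong2[where f="(+)"] sum.cong) (auto simp: distrib_left)
  finally show ?thesis unfolding unpert_def Nom_def using r by simp
qed

lemma C_mult_unpert_index:
  assumes y: "\<forall>k\<in>{1..n}. y k \<in> carrier_vec (d k)" and i: "2 \<le> i" "i \<le> n" and r: "r < d i"
  shows "(C i *\<^sub>v unpert y (i - 1)) $ r
         = (\<Sum>j\<in>{1..<i}. (-1) ^ (i - 1 - j) * (C i *\<^sub>v (D (i - 1) j *\<^sub>v y j)) $ r)"
proof -
  have Ci: "C i \<in> carrier_mat (d i) (d (i - 1))" using Cdim i by auto
  have "i - 1 \<in> {1..n}" using i by auto
  then have yi': "y (i - 1) \<in> carrier_vec (d (i - 1))" using y by blast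
  have "D (i - 1) j *\<^sub>v y j \<in> carrier_vec (d (i - 1))" if "j \<in> {1..<i - 1}" for j
  proof -
    have "D (i - 1) j \<in> carrier_mat (d (i - 1)) (d j)" using Dm_carrier that i by auto
    moreover have "y j \<in> carrier_vec (d j)" using y that i by auto
    ultimately show ?thesis by simp
  qed
  then have "(C i *\<^sub>v unpert y (i - 1)) $ r = (C i *\<^sub>v (D (i - 1) (i - 1) *\<^sub>v y (i - 1))) $ r
        + (\<Sum>j\<in>{1..<i - 1}. (-1) ^ (i - 1 - j) * (C i *\<^sub>v (D (i - 1) j *\<^sub>v y j)) $ r)"
    unfolding unpert_def using Dm_diag[of "i - 1"] i yi'
    by (subst mult_mat_vec_lincomb_index[OF Ci yi' _ r]) auto
  moreover have "{1..<i} = insert (i - 1) {1..<i - 1}" using i by auto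
  ultimately show ?thesis by simp
qed

lemma Lin_unpert:
  assumes y: "\<forall>k\<in>{1..n}. y k \<in> carrier_vec (d k)" and i: "i \<in> {1..n}"
  shows "Lin L C (unpert y) i = unpert (Nom L y) i"
proof (cases "i = 1")
  case True
  then have "y 1 \<in> carrier_vec (d 1)" "L 1 \<in> carrier_mat (d 1) (d 1)" using y Ldim i by auto
  then have "unpert y 1 = y 1" "unpert (Nom L y) 1 = L 1 *\<^sub>v y 1"
    using unpert_1[of y] unpert_1[of "Nom L y"] by (simp_all add: Nom_def)
  then show ?thesis unfolding True Lin_def by simp
next
  case False
  then have i2: "2 \<le> i" "i \<le> n" using i by auto
  have Li: "L i \<in> carrier_mat (d i) (d i)" and Ci: "C i \<in> carrier_mat (d i) (d (i - 1))"
    using Ldim Cdim i2 by auto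
  show ?thesis
  proof (rule eq_vecI)
    fix r assume "r < dim_vec (unpert (Nom L y) i)"
    then have r: "r < d i" by (simp add: unpert_def)
    have "Lin L C (unpert y) i $ r = (L i *\<^sub>v unpert y i) $ r + (C i *\<^sub>v unpert y (i - 1)) $ r"
      unfolding Lin_def using i2 r Li Ci unpert_carrier by simp
    then show "Lin L C (unpert y) i $ r = unpert (Nom L y) i $ r"
      using L_mult_unpert_index[OF y i2 r] C_mult_unpert_index[OF y i2 r]
        alternating_sign_sums_cancel[of "{1..<i}" i] by (simp add: add.assoc add.commute)
  qed (use Li Ci i2 in \<open>simp add: Lin_def unpert_def\<close>)
qed

lemma Lin_cong:
  assumes "\<forall>k\<in>{1..n}. z k = z' k" and "i \<in> {1..n}"
  shows "Lin L C z i = Lin L C z' i"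
proof (cases "i \<le> 1")
  case False
  then have "i - 1 \<in> {1..n}" using assms(2) by auto
  then show ?thesis using assms False by (simp add: Lin_def)
qed (use assms in \<open>simp add: Lin_def\<close>)

lemma Nom_funpow:
  assumes k: "k \<in> {1..n}" and y: "y k \<in> carrier_vec (d k)"
  shows "(Nom L ^^ t) y k = (L k ^\<^sub>m t) *\<^sub>v y k"
proof -
  have Lk: "L k \<in> carrier_mat (d k) (d k)" using Ldim k by auto
  show ?thesis
    using y
  proof (induction t arbitrary: y)
    case 0
    then show ?case using Lk by simp
  next
    case (Suc t)
    have "(Nom L ^^ Suc t) y k = (Nom L ^^ t) (Nom L y) k" by (simp only: funpow_Suc_right o_apply)
    also have "\<dots> = (L k ^\<^sub>m t) *\<^sub>v Nom L y k"
      by (rule Suc.IH) (use Suc.prems Lk in \<open>simp add: Nom_def\<close>)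
    also have "\<dots> = (L k ^\<^sub>m Suc t) *\<^sub>v y k"
      using Lk Suc.prems by (simp add: Nom_def assoc_mult_mat_vec[of _ "d k" "d k" _ "d k"])
    finally show ?case .
  qed
qed

lemma Nom_funpow_carrier:
  assumes "\<forall>k\<in>{1..n}. y k \<in> carrier_vec (d k)"
  shows "\<forall>k\<in>{1..n}. (Nom L ^^ t) y k \<in> carrier_vec (d k)"
proof
  fix k assume k: "k \<in> {1..n}"
  then have "L k ^\<^sub>m t \<in> carrier_mat (d k) (d k)" using Ldim by auto
  then show "(Nom L ^^ t) y k \<in> carrier_vec (d k)" using Nom_funpow[OF k] assms k by auto
qed

lemma Lin_funpow_unpert:
  assumes y: "\<forall>k\<in>{1..n}. y k \<in> carrier_vec (d k)"
  shows "\<forall>i\<in>{1..n}. (Lin L C ^^ t) (unpert y) i = unpert ((Nom L ^^ t) y) i"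
proof (induction t)
  case 0
  then show ?case by simp
next
  case (Suc t)
  show ?case
  proof
    fix i assume i: "i \<in> {1..n}"
    have "(Lin L C ^^ Suc t) (unpert y) i = Lin L C (unpert ((Nom L ^^ t) y)) i"
      using Lin_cong[OF Suc i] by simp
    also have "\<dots> = unpert ((Nom L ^^ Suc t) y) i"
      using Lin_unpert[OF Nom_funpow_carrier[OF y] i] by simp
    finally show "(Lin L C ^^ Suc t) (unpert y) i = unpert ((Nom L ^^ Suc t) y) i" .
  qed
qed

lemma Lin_funpow_eq_unpert:
  assumes x: "\<forall>k\<in>{1..n}. x k \<in> carrier_vec (d k)" and i: "i \<in> {1..n}"
  shows "(Lin L C ^^ t) x i = unpert ((Nom L ^^ t) (pertv d L C V lam x)) i"
proof -
  have p: "\<forall>k\<in>{1..n}. pertv d L C V lam x k \<in> carrier_vec (d k)"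
    using pert_carrier x unfolding pertv_def by auto
  have "\<forall>k\<in>{1..n}. (Lin L C ^^ t) x k = (Lin L C ^^ t) (unpert (pertv d L C V lam x)) k"
  proof (induction t)
    case (Suc t)
    then show ?case using Lin_cong by simp
  qed (simp add: unpert_pertv[OF x])
  then show ?thesis using Lin_funpow_unpert[OF p] i by simp
qed

lemma Psi_Lin_Nom_diff_eq:
  assumes i: "i \<in> {1..n}" and s: "s < d i" and x: "\<forall>k\<in>{1..n}. x k \<in> carrier_vec (d k)"
  shows "Psi V i s ((Lin L C ^^ t) x) - Psi V i s ((Nom L ^^ t) (pertv d L C V lam x))
         = psi V i s (vec (d i) (\<lambda>l. \<Sum>j\<in>{1..<i}. (-1) ^ (i - j) * (D i j *\<^sub>v ((L j ^\<^sub>m t) *\<^sub>v P x j)) $ l))"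
proof -
  define z where "z = (Nom L ^^ t) (pertv d L C V lam x)"
  have z: "z j = (L j ^\<^sub>m t) *\<^sub>v P x j" "z j \<in> carrier_vec (d j)" if "j \<in> {1..n}" for j
  proof -
    have "P x j \<in> carrier_vec (d j)" using pert_carrier x that by auto
    moreover have "L j ^\<^sub>m t \<in> carrier_mat (d j) (d j)" using Ldim that by auto
    ultimately show "z j = (L j ^\<^sub>m t) *\<^sub>v P x j" "z j \<in> carrier_vec (d j)"
      using Nom_funpow[OF that] unfolding z_def pertv_def by auto
  qed
  define R where "R = vec (d i) (\<lambda>l. \<Sum>j\<in>{1..<i}. (-1) ^ (i - j) * (D i j *\<^sub>v z j) $ l)"
  have B: "minv (V i) \<in> carrier_mat (d i) (d i)" using minv_inverse Vdim Vinv i by auto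
  have "(Lin L C ^^ t) x i = z i + R"
    using Lin_funpow_eq_unpert[OF x i, of t, folded z_def] z(2)[OF i] unfolding R_def unpert_def
    by (intro eq_vecI) auto
  then have "Psi V i s ((Lin L C ^^ t) x) - Psi V i s z = psi V i s R"
    unfolding Psi_def psi_def using B z(2)[OF i] s
    by (simp add: mult_add_distrib_mat_vec[OF B _ vec_carrier] R_def)
  moreover have "R = vec (d i) (\<lambda>l. \<Sum>j\<in>{1..<i}. (-1) ^ (i - j) * (D i j *\<^sub>v ((L j ^\<^sub>m t) *\<^sub>v P x j)) $ l)"
    unfolding R_def using z(1) i by (intro eq_vecI sum.cong) auto
  ultimately show ?thesis unfolding z_def by simp
qed

end

locale normed_cascade = cascade +
  fixes N :: "nat \<Rightarrow> complex vec \<Rightarrow> real"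
  assumes norms: "\<forall>i\<in>{1..n}. is_norm_on (d i) (N i)"
    and mono: "\<forall>i\<in>{1..<n}. opnorm (N i) (N i) (L i) < opnorm (N (i + 1)) (N (i + 1)) (L (i + 1))"
begin

lemma opnorm_L_strict_mono:
  "1 \<le> j \<Longrightarrow> j < i \<Longrightarrow> i \<le> n \<Longrightarrow> opnorm (N j) (N j) (L j) < opnorm (N i) (N i) (L i)"
proof (induction i)
  case (Suc i)
  then have "opnorm (N i) (N i) (L i) < opnorm (N (Suc i)) (N (Suc i)) (L (Suc i))"
    using mono by auto
  then show ?case using Suc by (cases "j = i") auto
qed simp

lemma Psi_Lin_Nom_diff_le:
  assumes i: "i \<in> {1..n}" and s: "s < d i" and x: "\<forall>k\<in>{1..n}. x k \<in> carrier_vec (d k)"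
  shows "cmod (Psi V i s ((Lin L C ^^ t) x) - Psi V i s ((Nom L ^^ t) (pertv d L C V lam x)))
         \<le> fnorm (N i) (d i) (psi V i s) *
            (\<Sum>j\<in>{1..<i}. opnorm (N i) (N j) (D i j) * N j ((L j ^\<^sub>m t) *\<^sub>v P x j))"
proof -
  define R where "R = vec (d i) (\<lambda>l. \<Sum>j\<in>{1..<i}. (-1) ^ (i - j) * (D i j *\<^sub>v ((L j ^\<^sub>m t) *\<^sub>v P x j)) $ l)"
  have B: "minv (V i) \<in> carrier_mat (d i) (d i)" using minv_inverse Vdim Vinv i by auto
  have Ni: "is_norm_on (d i) (N i)" using norms i by auto
  have psi: "psi V i s = (\<lambda>v. (minv (V i) *\<^sub>v v) $ s)" by (simp add: psi_def fun_eq_iff)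
  have DLP: "D i j \<in> carrier_mat (d i) (d j)" "is_norm_on (d j) (N j)"
    "(L j ^\<^sub>m t) *\<^sub>v P x j \<in> carrier_vec (d j)"
    "D i j *\<^sub>v ((L j ^\<^sub>m t) *\<^sub>v P x j) \<in> carrier_vec (d i)" if "j \<in> {1..<i}" for j
  proof -
    have j: "j \<in> {1..n}" using that i by auto
    then have "L j ^\<^sub>m t \<in> carrier_mat (d j) (d j)" "P x j \<in> carrier_vec (d j)"
      using Ldim pert_carrier x by auto
    moreover show "D i j \<in> carrier_mat (d i) (d j)" "is_norm_on (d j) (N j)"
      using Dm_carrier norms that i by auto
    ultimately show "(L j ^\<^sub>m t) *\<^sub>v P x j \<in> carrier_vec (d j)"
      "D i j *\<^sub>v ((L j ^\<^sub>m t) *\<^sub>v P x j) \<in> carrier_vec (d i)" by simp_all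
  qed
  have "N i R \<le> (\<Sum>j\<in>{1..<i}. cmod ((-1) ^ (i - j)) * N i (D i j *\<^sub>v ((L j ^\<^sub>m t) *\<^sub>v P x j)))"
    unfolding R_def using DLP(4) by (intro is_norm_on_sum_le[OF Ni]) auto
  also have "\<dots> \<le> (\<Sum>j\<in>{1..<i}. opnorm (N i) (N j) (D i j) * N j ((L j ^\<^sub>m t) *\<^sub>v P x j))"
    using opnorm_mult_le(1)[OF DLP(1,2) Ni] DLP(3) by (intro sum_mono) (simp add: norm_power)
  finally have "N i R \<le> (\<Sum>j\<in>{1..<i}. opnorm (N i) (N j) (D i j) * N j ((L j ^\<^sub>m t) *\<^sub>v P x j))" .
  moreover have "cmod (psi V i s R) \<le> fnorm (N i) (d i) (psi V i s) * N i R"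
    "0 \<le> fnorm (N i) (d i) (psi V i s)"
    unfolding psi R_def using fnorm_coord_mult_le[OF B s Ni] by simp_all
  ultimately show ?thesis
    unfolding Psi_Lin_Nom_diff_eq[OF i s x] R_def by (meson mult_left_mono order_trans)
qed

lemma Psi_Lin_Nom_diff_ratio_tendsto_0:
  assumes i: "i \<in> {1..n}" and s: "s < d i" and x: "\<forall>k\<in>{1..n}. x k \<in> carrier_vec (d k)"
  shows "(\<lambda>t. cmod (Psi V i s ((Lin L C ^^ t) x) - Psi V i s ((Nom L ^^ t) (pertv d L C V lam x)))
               / opnorm (N i) (N i) (L i) ^ t) \<longlonglongrightarrow> 0"
proof (rule ratio_tendsto_0_if_dominated_by_slower_powers)
  define F where "F = fnorm (N i) (d i) (psi V i s)"
  define r where "r j = opnorm (N j) (N j) (L j)" for j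
  have norm_L: "is_norm_on (d j) (N j)" "L j \<in> carrier_mat (d j) (d j)" if "j \<in> {1..n}" for j
    using norms Ldim that by auto
  show "\<forall>j\<in>{1..<i}. 0 \<le> r j \<and> r j < r i"
    unfolding r_def using opnorm_mult_le(2)[OF norm_L(2) norm_L(1) norm_L(1)] opnorm_L_strict_mono i
    by auto
  fix t
  have B: "minv (V i) \<in> carrier_mat (d i) (d i)" using minv_inverse Vdim Vinv i by auto
  have "0 \<le> F"
    unfolding F_def using fnorm_coord_mult_le(2)[OF B s] norms i by (simp add: psi_def[abs_def])
  moreover have term_le: "opnorm (N i) (N j) (D i j) * N j ((L j ^\<^sub>m t) *\<^sub>v P x j)
                 \<le> opnorm (N i) (N j) (D i j) * N j (P x j) * r j ^ t" if j: "j \<in> {1..<i}" for j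
  proof -
    have jn: "j \<in> {1..n}" using i j by auto
    have "0 \<le> opnorm (N i) (N j) (D i j)"
      using opnorm_mult_le(2)[OF Dm_carrier[of j i] norm_L(1)[OF jn]] norms i j by auto
    moreover have "N j ((L j ^\<^sub>m t) *\<^sub>v P x j) \<le> r j ^ t * N j (P x j)"
      unfolding r_def using opnorm_pow_mult_le[OF norm_L(2,1)[OF jn]] pert_carrier[OF jn] x jn by auto
    ultimately have "opnorm (N i) (N j) (D i j) * N j ((L j ^\<^sub>m t) *\<^sub>v P x j)
                     \<le> opnorm (N i) (N j) (D i j) * (r j ^ t * N j (P x j))"
      by (simp add: mult_left_mono)
    then show ?thesis by (simp add: mult_ac)
  qed
  ultimately have "F * (\<Sum>j\<in>{1..<i}. opnorm (N i) (N j) (D i j) * N j ((L j ^\<^sub>m t) *\<^sub>v P x j))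
                   \<le> F * (\<Sum>j\<in>{1..<i}. opnorm (N i) (N j) (D i j) * N j (P x j) * r j ^ t)"
    by (intro mult_left_mono[OF sum_mono]) auto
  also have "\<dots> = (\<Sum>j\<in>{1..<i}. (F * opnorm (N i) (N j) (D i j) * N j (P x j)) * r j ^ t)"
    by (simp add: sum_distrib_left mult.assoc)
  finally show "cmod (Psi V i s ((Lin L C ^^ t) x) - Psi V i s ((Nom L ^^ t) (pertv d L C V lam x)))
             \<le> (\<Sum>j\<in>{1..<i}. (F * opnorm (N i) (N j) (D i j) * N j (P x j)) * r j ^ t)"
    using Psi_Lin_Nom_diff_le[OF i s x, of t] unfolding F_def by linarith
qed simp_all

end

theorem theorem2:
  fixes n :: nat and d :: "nat \<Rightarrow> nat"
    and L C V :: "nat \<Rightarrow> complex mat" and lam :: "nat \<Rightarrow> nat \<Rightarrow> complex"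
    and N :: "nat \<Rightarrow> complex vec \<Rightarrow> real"
  assumes n: "n \<ge> 1"
    and d: "\<forall>i\<in>{1..n}. d i \<ge> 1"
    and norms: "\<forall>i\<in>{1..n}. is_norm_on (d i) (N i)"
    and Ldim: "\<forall>i\<in>{1..n}. L i \<in> carrier_mat (d i) (d i)"
    and Cdim: "\<forall>i\<in>{2..n}. C i \<in> carrier_mat (d i) (d (i - 1))"
    and Vdim: "\<forall>i\<in>{1..n}. V i \<in> carrier_mat (d i) (d i)"
    and Linv: "\<forall>i\<in>{1..n}. invertible_mat (L i)"
    and Vinv: "\<forall>i\<in>{1..n}. invertible_mat (V i)"
    and diag: "\<forall>i\<in>{1..n}. L i * V i = V i * diagm (d i) (lam i)"
    and spec: "\<forall>i\<in>{1..n}. \<forall>j\<in>{1..n}. i \<noteq> j \<longrightarrow> spectrum (L i) \<inter> spectrum (L j) = {}"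
    and mono: "\<forall>i\<in>{1..<n}. opnorm (N i) (N i) (L i) < opnorm (N (i + 1)) (N (i + 1)) (L (i + 1))"
    and le1: "opnorm (N n) (N n) (L n) \<le> 1"
  shows "\<forall>i\<in>{1..n}. \<forall>s<d i. \<forall>x. (\<forall>k\<in>{1..n}. x k \<in> carrier_vec (d k)) \<longrightarrow>
           (\<forall>t::nat.
              cmod (Psi V i s ((Lin L C ^^ t) x) - Psi V i s ((Nom L ^^ t) (pertv d L C V lam x)))
              \<le> fnorm (N i) (d i) (psi V i s) *
                 (\<Sum>j\<in>{1..<i}. opnorm (N i) (N j) (Dm d L C V lam i j)
                                 * N j ((L j ^\<^sub>m t) *\<^sub>v pert d L C V lam x j)))
         \<and> ((\<lambda>t. cmod (Psi V i s ((Lin L C ^^ t) x) - Psi V i s ((Nom L ^^ t) (pertv d L C V lam x)))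
                 / opnorm (N i) (N i) (L i) ^ t) \<longlonglongrightarrow> 0)"
proof -
  interpret normed_cascade n d L C V lam N
    using Ldim Cdim Vdim Linv Vinv diag spec norms mono by unfold_locales
  show ?thesis
    using Psi_Lin_Nom_diff_le Psi_Lin_Nom_diff_ratio_tendsto_0 by blast
qed

end
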